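(* Let $p\ne3$ be a prime, $a\in\mathbb{Z}_p^*$ and $b,c\in\mathbb{Z}_p$. Then $Q_{a,b}(\mathbb{Z}_p)\cong Q_{a,c}(\mathbb{Z}_p)$.
   Context: Identify $\mathbb{Z}_p$ with $\{0,\dots,p-1\}$. The overflow indicator is $(x,y)_p=1$ if $x+y\ge p$ as integers and $0$ otherwise. $Q_{a,b}(\mathbb{Z}_p)$ is $\mathbb{Z}_p^3$ with multiplication $(x_1,x_2,x_3)(y_1,y_2,y_3)=(x_1+y_1+(x_2+y_2)x_3y_3+a(x_2,y_2)_p+b(x_3,y_3)_p,\ x_2+y_2,\ x_3+y_3)$. *)

theory Defs
  imports Main "HOL-Computational_Algebra.Primes"
begin

text \<open>Z_p is identified with {0,...,p-1} (naturals). Overflow indicator (x,y)_p.\<close>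
definition ovf :: "nat \<Rightarrow> nat \<Rightarrow> nat \<Rightarrow> nat" where
  "ovf p x y = (if x + y \<ge> p then 1 else 0)"

definition Zp3 :: "nat \<Rightarrow> (nat \<times> nat \<times> nat) set" where
  "Zp3 p = {0..<p} \<times> {0..<p} \<times> {0..<p}"

fun Qmult :: "nat \<Rightarrow> nat \<Rightarrow> nat \<Rightarrow> nat \<times> nat \<times> nat \<Rightarrow> nat \<times> nat \<times> nat \<Rightarrow> nat \<times> nat \<times> nat" where
  "Qmult p a b (x1, x2, x3) (y1, y2, y3) =
     ((x1 + y1 + ((x2 + y2) mod p) * x3 * y3 + a * ovf p x2 y2 + b * ovf p x3 y3) mod p,
      (x2 + y2) mod p, (x3 + y3) mod p)"

definition magma_iso :: "'a set \<Rightarrow> ('a \<Rightarrow> 'a \<Rightarrow> 'a) \<Rightarrow> 'b set \<Rightarrow> ('b \<Rightarrow> 'b \<Rightarrow> 'b) \<Rightarrow> bool" where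
  "magma_iso A m B n \<longleftrightarrow> (\<exists>f. bij_betw f A B \<and> (\<forall>x\<in>A. \<forall>y\<in>A. f (m x y) = n (f x) (f y)))"

end

theory Submission
  imports Defs "HOL-Number_Theory.Number_Theory"
begin

(* An explicit isomorphism Q_{a,b} -> Q_{a,c} is the "twist"
     (x1, x2, x3)  |->  (x1 + a * k(x2 + n x3) + m x3^3,  x2 + n x3,  x3)   (mod p),
   where k(u) = u div p is the carry produced when u is reduced mod p, and the
   parameters satisfy  a n + c = b  and  3 m = n  (mod p).  Such n, m exist because
   a and 3 are units mod p; this is where p prime, p <> 3 and a <> 0 enter. *)

lemma ovf_eq_carry:
  assumes "x < p" and "y < p"
  shows "ovf p x y = (x + y) div p"
  using assms unfolding ovf_def by (auto simp: div_if not_le)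

lemma Qmult_carry_form:
  assumes "x2 < p" "x3 < p" "y2 < p" "y3 < p"
  shows "Qmult p a b (x1, x2, x3) (y1, y2, y3) =
    ((x1 + y1 + ((x2 + y2) mod p) * x3 * y3 + a * ((x2 + y2) div p) + b * ((x3 + y3) div p)) mod p,
     (x2 + y2) mod p, (x3 + y3) mod p)"
  using assms by (simp add: ovf_eq_carry)

definition twist :: "nat \<Rightarrow> nat \<Rightarrow> nat \<Rightarrow> nat \<Rightarrow> nat \<times> nat \<times> nat \<Rightarrow> nat \<times> nat \<times> nat" where
  "twist p a n m = (\<lambda>(x1, x2, x3).
     ((x1 + a * ((x2 + n * x3) div p) + m * x3 ^ 3) mod p, (x2 + n * x3) mod p, x3))"

lemma div_add_split_carry:
  fixes u v p :: nat
  shows "(u + v) div p = u div p + (u mod p + v) div p"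
proof (cases "p = 0")
  case False
  have "u + v = (u mod p + v) + (u div p) * p"
    by (metis add.commute add.left_commute mod_div_mult_eq)
  then show ?thesis
    by (simp only: div_mult_self1 [OF False])
qed simp

text \<open>Carry cocycle of the shear: adding after shearing produces the same total carry
  as shearing after adding, since both equal the carry of x2 + y2 + n (x3 + y3).\<close>
lemma shear_carry_cocycle:
  fixes p n x2 x3 y2 y3 :: nat
  shows "(x2 + n * x3) div p + (y2 + n * y3) div p
           + ((x2 + n * x3) mod p + (y2 + n * y3) mod p) div p
       = (x2 + y2) div p + n * ((x3 + y3) div p) + ((x2 + y2) mod p + n * ((x3 + y3) mod p)) div p"
proof -
  have "(x2 + n * x3) div p + (y2 + n * y3) div p
          + ((x2 + n * x3) mod p + (y2 + n * y3) mod p) div p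
      = ((x2 + n * x3) + (y2 + n * y3)) div p"
    by (simp only: div_add1_eq [of "x2 + n * x3"])
  also have "(x2 + n * x3) + (y2 + n * y3)
      = (x2 + y2 + n * ((x3 + y3) mod p)) + (n * ((x3 + y3) div p)) * p"
  proof -
    have "n * x3 + n * y3 = n * ((x3 + y3) mod p) + n * ((x3 + y3) div p) * p"
      by (metis distrib_left mult.assoc mod_div_mult_eq)
    then show ?thesis by linarith
  qed
  also have "(x2 + y2 + n * ((x3 + y3) mod p) + (n * ((x3 + y3) div p)) * p) div p
      = (x2 + y2 + n * ((x3 + y3) mod p)) div p + n * ((x3 + y3) div p)"
    by (cases "p = 0") simp_all
  also have "(x2 + y2 + n * ((x3 + y3) mod p)) div p
      = (x2 + y2) div p + ((x2 + y2) mod p + n * ((x3 + y3) mod p)) div p"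
    by (rule div_add_split_carry)
  finally show ?thesis by simp
qed

lemma shear_add_mod:
  fixes p n x2 x3 y2 y3 :: nat
  shows "((x2 + y2) mod p + n * ((x3 + y3) mod p)) mod p
       = ((x2 + n * x3) mod p + (y2 + n * y3) mod p) mod p"
proof -
  have "((x2 + y2) mod p + n * ((x3 + y3) mod p)) mod p = (x2 + y2 + n * (x3 + y3)) mod p"
    by (rule mod_add_cong) (simp_all add: mod_mult_right_eq)
  also have "x2 + y2 + n * (x3 + y3) = (x2 + n * x3) + (y2 + n * y3)"
    by (simp add: algebra_simps)
  finally show ?thesis
    by (simp add: mod_add_eq)
qed

text \<open>Here s2, s3
  are the reduced sums of the middle and last coordinates and o2, o3 their carries;
  uz, uw, ov are the shear carries of the two factors and of their sum, U the shear
  carry of the product, and r the middle coordinate of the product.  The difference of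
  the two sides splits into five summands, each a multiple of p by one hypothesis.\<close>
lemma first_coordinate_cong:
  fixes p a b c n m x1 y1 x3 y3 s2 s3 o2 o3 uz uw ov U r :: int
  assumes carry: "uz + uw + ov = o2 + n * o3 + U"
    and r: "[r = s2 + n * s3] (mod p)"
    and s3: "[s3 = x3 + y3] (mod p)"
    and bc: "[a * n + c = b] (mod p)"
    and m: "[3 * m = n] (mod p)"
  shows "[x1 + y1 + s2 * x3 * y3 + a * o2 + b * o3 + a * U + m * s3 ^ 3
        = (x1 + a * uz + m * x3 ^ 3) + (y1 + a * uw + m * y3 ^ 3) + r * x3 * y3 + a * ov + c * o3]
        (mod p)"
proof -
  have ov: "ov = o2 + n * o3 + U - uz - uw"
    using carry by simp
  have "(x1 + y1 + s2 * x3 * y3 + a * o2 + b * o3 + a * U + m * s3 ^ 3)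
      - ((x1 + a * uz + m * x3 ^ 3) + (y1 + a * uw + m * y3 ^ 3) + r * x3 * y3 + a * ov + c * o3)
      = (s2 + n * s3 - r) * (x3 * y3) + (b - (a * n + c)) * o3 + m * (s3 ^ 3 - (x3 + y3) ^ 3)
        + (3 * m - n) * (x3 * y3 * s3) + 3 * m * x3 * y3 * (x3 + y3 - s3)"
    unfolding ov by (simp add: algebra_simps power3_eq_cube)
  moreover have "p dvd (s2 + n * s3 - r) * (x3 * y3)"
    using r by (simp add: cong_iff_dvd_diff dvd_diff_commute)
  moreover have "p dvd (b - (a * n + c)) * o3"
    using bc by (simp add: cong_iff_dvd_diff dvd_diff_commute)
  moreover have "p dvd m * (s3 ^ 3 - (x3 + y3) ^ 3)"
    using cong_pow [OF s3, of 3] by (simp add: cong_iff_dvd_diff)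
  moreover have "p dvd (3 * m - n) * (x3 * y3 * s3)"
    using m by (simp add: cong_iff_dvd_diff)
  moreover have "p dvd 3 * m * x3 * y3 * (x3 + y3 - s3)"
    using s3 by (simp add: cong_iff_dvd_diff dvd_diff_commute)
  ultimately show ?thesis
    by (simp add: cong_iff_dvd_diff)
qed

lemma first_coordinate_cong_nat:
  fixes p a b c n m x1 y1 x3 y3 s2 s3 o2 o3 uz uw ov U r :: nat
  assumes carry: "uz + uw + ov = o2 + n * o3 + U"
    and "[r = s2 + n * s3] (mod p)" and "[s3 = x3 + y3] (mod p)"
    and "[a * n + c = b] (mod p)" and "[3 * m = n] (mod p)"
  shows "[x1 + y1 + s2 * x3 * y3 + a * o2 + b * o3 + a * U + m * s3 ^ 3
        = (x1 + a * uz + m * x3 ^ 3) + (y1 + a * uw + m * y3 ^ 3) + r * x3 * y3 + a * ov + c * o3]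
        (mod p)"
proof -
  have "[int (x1 + y1 + s2 * x3 * y3 + a * o2 + b * o3 + a * U + m * s3 ^ 3)
       = int ((x1 + a * uz + m * x3 ^ 3) + (y1 + a * uw + m * y3 ^ 3) + r * x3 * y3 + a * ov + c * o3)]
       (mod int p)"
    unfolding of_nat_add of_nat_mult of_nat_power
    using arg_cong [OF carry, of int] assms(2-5)
    by (intro first_coordinate_cong) (simp_all add: cong_int_iff [symmetric])
  then show ?thesis
    by (simp only: cong_int_iff)
qed

lemma twist_hom:
  fixes p a b c n m x1 x2 x3 y1 y2 y3 :: nat
  assumes lt: "x2 < p" "x3 < p" "y2 < p" "y3 < p"
    and bc: "[a * n + c = b] (mod p)" and m: "[3 * m = n] (mod p)"
  shows "twist p a n m (Qmult p a b (x1, x2, x3) (y1, y2, y3))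
       = Qmult p a c (twist p a n m (x1, x2, x3)) (twist p a n m (y1, y2, y3))"
proof -
  have p: "p > 0"
    using lt by simp
  define s2 s3 o2 o3 where "s2 = (x2 + y2) mod p" and "s3 = (x3 + y3) mod p"
    and "o2 = (x2 + y2) div p" and "o3 = (x3 + y3) div p"
  define u2 v2 uz uw where "u2 = (x2 + n * x3) mod p" and "v2 = (y2 + n * y3) mod p"
    and "uz = (x2 + n * x3) div p" and "uw = (y2 + n * y3) div p"
  define U r ov where "U = (s2 + n * s3) div p" and "r = (u2 + v2) mod p"
    and "ov = (u2 + v2) div p"
  have "u2 < p" "v2 < p"
    using p by (simp_all add: u2_def v2_def)
  have left: "twist p a n m (Qmult p a b (x1, x2, x3) (y1, y2, y3))
      = (((x1 + y1 + s2 * x3 * y3 + a * o2 + b * o3) mod p + a * U + m * s3 ^ 3) mod p,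
         (s2 + n * s3) mod p, s3)"
    using lt by (simp del: Qmult.simps add: Qmult_carry_form twist_def s2_def s3_def o2_def o3_def
        U_def)
  have right: "Qmult p a c (twist p a n m (x1, x2, x3)) (twist p a n m (y1, y2, y3))
      = (((x1 + a * uz + m * x3 ^ 3) mod p + (y1 + a * uw + m * y3 ^ 3) mod p
           + r * x3 * y3 + a * ov + c * o3) mod p, r, s3)"
    using lt \<open>u2 < p\<close> \<open>v2 < p\<close>
    by (simp del: Qmult.simps add: Qmult_carry_form twist_def u2_def v2_def uz_def uw_def
        r_def ov_def s3_def o3_def)
  have middle: "(s2 + n * s3) mod p = r"
    unfolding s2_def s3_def r_def u2_def v2_def by (rule shear_add_mod)
  have carry: "uz + uw + ov = o2 + n * o3 + U"
    using shear_carry_cocycle [of x2 n x3 p y2 y3]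
    by (simp add: uz_def uw_def ov_def u2_def v2_def o2_def o3_def U_def s2_def s3_def)
  have r_cong: "[r = s2 + n * s3] (mod p)"
    using middle by (simp add: cong_def r_def)
  have s3_cong: "[s3 = x3 + y3] (mod p)"
    by (simp add: cong_def s3_def)
  have "[x1 + y1 + s2 * x3 * y3 + a * o2 + b * o3 + a * U + m * s3 ^ 3
       = (x1 + a * uz + m * x3 ^ 3) + (y1 + a * uw + m * y3 ^ 3) + r * x3 * y3 + a * ov + c * o3]
       (mod p)"
    using carry r_cong s3_cong bc m by (rule first_coordinate_cong_nat)
  moreover have "[(x1 + y1 + s2 * x3 * y3 + a * o2 + b * o3) mod p + a * U + m * s3 ^ 3
       = x1 + y1 + s2 * x3 * y3 + a * o2 + b * o3 + a * U + m * s3 ^ 3] (mod p)"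
    by (intro cong_add cong_refl) (simp add: cong_def)
  moreover have "[(x1 + a * uz + m * x3 ^ 3) mod p + (y1 + a * uw + m * y3 ^ 3) mod p
          + r * x3 * y3 + a * ov + c * o3
       = (x1 + a * uz + m * x3 ^ 3) + (y1 + a * uw + m * y3 ^ 3) + r * x3 * y3 + a * ov + c * o3]
       (mod p)"
    by (intro cong_add cong_refl) (simp_all add: cong_def)
  ultimately have first: "((x1 + y1 + s2 * x3 * y3 + a * o2 + b * o3) mod p + a * U + m * s3 ^ 3) mod p
      = ((x1 + a * uz + m * x3 ^ 3) mod p + (y1 + a * uw + m * y3 ^ 3) mod p
          + r * x3 * y3 + a * ov + c * o3) mod p"
    unfolding cong_def by simp
  show ?thesis
    unfolding left right middle first ..
qed

lemma reduced_translation_inj: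
  fixes x y k p :: nat
  assumes "x < p" "y < p" and "(x + k) mod p = (y + k) mod p"
  shows "x = y"
proof -
  have "[x = y] (mod p)"
    using assms(3) by (simp add: cong_def [symmetric] cong_add_rcancel_nat)
  then show ?thesis
    using assms(1,2) by (rule cong_less_modulus_unique_nat)
qed

text \<open>The twist maps Zp3 p injectively into itself: the last coordinate is kept, and
  each earlier coordinate is translated by an amount depending only on later ones.\<close>
lemma twist_inj:
  "inj_on (twist p a n m) (Zp3 p)"
proof (rule inj_onI)
  fix x y
  assume "x \<in> Zp3 p" "y \<in> Zp3 p" and eq: "twist p a n m x = twist p a n m y"
  then obtain x1 x2 x3 y1 y2 y3 where xy: "x = (x1, x2, x3)" "y = (y1, y2, y3)"
    and lt: "x1 < p" "x2 < p" "x3 < p" "y1 < p" "y2 < p" "y3 < p"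
    by (auto simp: Zp3_def)
  have "x3 = y3"
    using eq by (simp add: xy twist_def)
  moreover have "x2 = y2"
    using eq \<open>x3 = y3\<close> lt
    by (intro reduced_translation_inj [of x2 p y2 "n * y3"]) (simp_all add: xy twist_def)
  moreover have "x1 = y1"
    using eq \<open>x3 = y3\<close> \<open>x2 = y2\<close> lt
    by (intro reduced_translation_inj [of x1 p y1 "a * ((y2 + n * y3) div p) + m * y3 ^ 3"])
      (simp_all add: xy twist_def add.assoc)
  ultimately show "x = y"
    using xy by simp
qed

lemma twist_bij:
  "bij_betw (twist p a n m) (Zp3 p) (Zp3 p)"
proof -
  have "twist p a n m ` Zp3 p \<subseteq> Zp3 p"
    by (auto simp: Zp3_def twist_def)
  moreover have "finite (Zp3 p)"
    by (simp add: Zp3_def)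
  ultimately show ?thesis
    using twist_inj endo_inj_surj unfolding bij_betw_def by blast
qed

lemma twist_parameters_exist:
  fixes p a b c :: nat
  assumes "coprime a p" and "coprime 3 p"
  obtains n m where "[a * n + c = b] (mod p)" and "[3 * m = n] (mod p)"
proof -
  have "p > 0"
    using assms(2) by (cases p) auto
  obtain a' where a': "[a * a' = 1] (mod p)"
    using cong_solve_coprime_nat [OF assms(1)] by auto
  obtain t where t: "[3 * t = 1] (mod p)"
    using cong_solve_coprime_nat [OF assms(2)] by auto
  define n where "n = a' * (b + (p - 1) * c)"
  have "[a * n + c = 1 * (b + (p - 1) * c) + c] (mod p)"
    unfolding n_def mult.assoc [symmetric] by (intro cong_add cong_mult a' cong_refl)
  also have "1 * (b + (p - 1) * c) + c = b + c * p"
    using \<open>p > 0\<close> by (cases p) (simp_all add: algebra_simps)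
  also have "[b + c * p = b] (mod p)"
    by (simp add: cong_def)
  finally have "[a * n + c = b] (mod p)" .
  moreover have "[3 * (t * n) = n] (mod p)"
    using cong_mult [OF t cong_refl [of n]] by (simp add: mult.assoc)
  ultimately show ?thesis
    by (rule that)
qed

theorem corollary5p10:
  fixes p a b c :: nat
  assumes "prime p" and "p \<noteq> 3"
    and "a \<in> {1..<p}" and "b \<in> {0..<p}" and "c \<in> {0..<p}"
  shows "magma_iso (Zp3 p) (Qmult p a b) (Zp3 p) (Qmult p a c)"
proof -
  have "\<not> p dvd a"
    using assms(3) by (auto dest: dvd_imp_le)
  then have "coprime a p"
    using prime_imp_coprime [OF assms(1)] coprime_commute by blast
  have "\<not> p dvd 3"
    using assms(1,2) primes_dvd_imp_eq [of p 3] by auto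
  then have "coprime 3 p"
    using prime_imp_coprime [OF assms(1)] coprime_commute by blast
  obtain n m where nm: "[a * n + c = b] (mod p)" "[3 * m = n] (mod p)"
    using twist_parameters_exist [OF \<open>coprime a p\<close> \<open>coprime 3 p\<close>] .
  have "\<forall>x\<in>Zp3 p. \<forall>y\<in>Zp3 p.
      twist p a n m (Qmult p a b x y) = Qmult p a c (twist p a n m x) (twist p a n m y)"
    using twist_hom [OF _ _ _ _ nm] by (auto simp: Zp3_def)
  then show ?thesis
    unfolding magma_iso_def using twist_bij by blast
qed

end
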